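(* Let $d\ge1$, let $T>0$ be a finite random variable with $D\in\{1,\dots,d\}$, and let $\tilde T$ be a finite random variable with $0<\tilde T\le T$ and $\tilde D=D\,\mathbf 1\{\tilde T=T\}$. Then for all $j\in\{1,\dots,d\}$, all $s\in\mathcal J$ and all $t>s$: $$ \begin{aligned} &P(T\le t,D=j\mid T>s)-P(T\le t,D=j\mid\tilde T>s)\\ &=\int_{(s,t]}F_j(t\mid u)\frac{\tilde S(u-)}{\tilde S(s)}(\tilde H-H)(du)+\int_{(s,t]}\frac{\tilde S(u-)}{\tilde S(s)}(H_j-\tilde H_j)(du)\\ &\quad+\frac{1}{\tilde S(s)}\int_{(s,t]}\big(F_j(t\mid u)-P(T\le t,D=j\mid\tilde T=u,\tilde D=0)\big)\tilde F_0(du). \end{aligned} $$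
   Context: Functions of the event time: - $S(t)=P(T>t)$. - $F_j(t)=P(T\le t,D=j)$. - $F_j(t\mid u)=P(T\le t,D=j\mid T>u)=(F_j(t)-F_j(u))/S(u)$ for $t\ge u$. - $H_j(t)=\int_{(0,t]}S(s-)^{-1}F_j(ds)$, and $H=\sum_{j=1}^dH_j$. Observed quantities: - $\tilde S(t)=P(\tilde T>t)$. - $\tilde F_j(t)=P(\tilde T\le t,\tilde D=j)$ for $j=0,\dots,d$. - $\tilde H_j(t)=\int_{(0,t]}\tilde S(s-)^{-1}\tilde F_j(ds)$, and $\tilde H=\sum_{j=1}^d\tilde H_j$. - Division by $0$ occurs only on null sets of the integrator. - $\mathcal J=\{t\ge0:\tilde S(t)>0\}$. $P(\cdot\mid\tilde T=u,\tilde D=0)$ is a regular conditional probability, determined $\tilde F_0$-a.e. *)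

theory Defs
  imports "HOL-Probability.Probability"
begin

definition surv :: "'a measure \<Rightarrow> ('a \<Rightarrow> real) \<Rightarrow> real \<Rightarrow> real" where
  "surv M X t = measure M {\<omega> \<in> space M. X \<omega> > t}"

definition surv_left :: "'a measure \<Rightarrow> ('a \<Rightarrow> real) \<Rightarrow> real \<Rightarrow> real" where
  "surv_left M X t = Lim (at_left t) (surv M X)"

definition cif :: "'a measure \<Rightarrow> ('a \<Rightarrow> real) \<Rightarrow> ('a \<Rightarrow> nat) \<Rightarrow> nat \<Rightarrow> real \<Rightarrow> real" where
  "cif M X E j t = measure M {\<omega> \<in> space M. X \<omega> \<le> t \<and> E \<omega> = j}"

definition cond_cif :: "'a measure \<Rightarrow> ('a \<Rightarrow> real) \<Rightarrow> ('a \<Rightarrow> nat) \<Rightarrow> nat \<Rightarrow> real \<Rightarrow> real \<Rightarrow> real" where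
  "cond_cif M X E j t u = (cif M X E j t - cif M X E j u) / surv M X u"

definition cif_meas :: "'a measure \<Rightarrow> ('a \<Rightarrow> real) \<Rightarrow> ('a \<Rightarrow> nat) \<Rightarrow> nat \<Rightarrow> real measure" where
  "cif_meas M X E j = measure_of UNIV (sets borel)
      (\<lambda>A. emeasure M {\<omega> \<in> space M. X \<omega> \<in> A \<and> E \<omega> = j})"

text \<open>Cause-specific cumulative hazard measure H_j(du) = S(u-)^{-1} F_j(du)
  (division by zero yields 0, which only happens on F_j-null sets).\<close>
definition haz_meas :: "'a measure \<Rightarrow> ('a \<Rightarrow> real) \<Rightarrow> ('a \<Rightarrow> nat) \<Rightarrow> nat \<Rightarrow> real measure" where
  "haz_meas M X E j = density (cif_meas M X E j) (\<lambda>u. ennreal (1 / surv_left M X u))"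

end

theory Submission
  imports Defs
begin

(*
  Write c(u) = F_j(t | u) = P(A | T > u) with A = {T <= t, D = j}, and S(u) = P(T > u),
  S(u-) = P(T >= u). Expanding 1/(S(s) - P(s < T <= u)) into a geometric series and integrating
  the powers of u |-> P(s < T <= u) by parts gives the chain rule
    1/S(w) - 1/S(s) = int_(s,w] P(T in du) / (S(u) S(u-)).
  Inserting c(u) = E[1_A 1(T > u)] / S(u) and using Fubini, it yields the Duhamel identity
    c(s) + int_(s,w] c dH = c(w) + H_j(s,w]      for s <= w <= t.
  Integrating this identity in w = min(T~', t) against the law of the censored time T~ turns
  the weight into S~(u-) = P(T~' >= u):
    c(s) S~(s) + int_(s,t] c(u) S~(u-) H(du) = E[c(T~); s < T~ <= t] + int_(s,t] S~(u-) H_j(du).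
  On {D~ <> 0} the expectation is int c S~(u-) dH~, because S~(T~-) > 0 almost surely, and on
  {D~ = 0} it is the F~_0 term. Splitting {T <= t, D = j, T~ > s} according to D~ = j or D~ = 0
  gives the formula; all integrands are bounded because T~ <= T.
*)

lemma borel_measurable_measure_interval:
  fixes \<mu> :: "real measure"
  assumes "finite_measure \<mu>" and "sets \<mu> = sets borel"
  shows "(\<lambda>u. measure \<mu> {s<..u}) \<in> borel_measurable borel"
    and "(\<lambda>u. measure \<mu> {s<..<u}) \<in> borel_measurable borel"
    and "(\<lambda>u. emeasure \<mu> {s<..u}) \<in> borel_measurable borel"
    and "(\<lambda>u. emeasure \<mu> {s<..<u}) \<in> borel_measurable borel"
proof -
  interpret finite_measure \<mu> by fact
  have "mono (\<lambda>u. measure \<mu> {s<..u})" and "mono (\<lambda>u. measure \<mu> {s<..<u})"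
    by (intro monoI finite_measure_mono; auto simp: assms)+
  then show "(\<lambda>u. measure \<mu> {s<..u}) \<in> borel_measurable borel"
    and "(\<lambda>u. measure \<mu> {s<..<u}) \<in> borel_measurable borel"
    by (auto intro: borel_measurable_mono)
  then show "(\<lambda>u. emeasure \<mu> {s<..u}) \<in> borel_measurable borel"
    and "(\<lambda>u. emeasure \<mu> {s<..<u}) \<in> borel_measurable borel"
    by (simp_all add: emeasure_eq_measure)
qed

lemma nn_integral_interval_parts:
  fixes \<mu> :: "real measure" and f :: "real \<Rightarrow> ennreal"
  assumes fin: "finite_measure \<mu>" and sets[measurable_cong]: "sets \<mu> = sets borel"
    and f[measurable]: "f \<in> borel_measurable borel"
  shows "(\<integral>\<^sup>+x. indicator {s<..b} x * f x \<partial>\<mu>) * emeasure \<mu> {s<..b}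
       = (\<integral>\<^sup>+y. indicator {s<..b} y * (\<integral>\<^sup>+x. indicator {s<..y} x * f x \<partial>\<mu>) \<partial>\<mu>)
       + (\<integral>\<^sup>+x. indicator {s<..b} x * emeasure \<mu> {s<..<x} * f x \<partial>\<mu>)"
proof -
  interpret finite_measure \<mu> by fact
  interpret pair_sigma_finite \<mu> \<mu> by unfold_locales
  have [measurable]: "Measurable.pred (borel \<Otimes>\<^sub>M borel) (\<lambda>p::real \<times> real. fst p \<in> {s<..snd p})"
    by simp
  note [measurable] = borel_measurable_measure_interval[OF fin sets]
  let ?I = "indicator {s<..b} :: real \<Rightarrow> ennreal"
  have split: "?I x * f x * ?I y = ?I y * (indicator {s<..y} x * f x) + ?I x * f x * indicator {s<..<x} y"
    for x y by (auto simp: indicator_def)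
  have "(\<integral>\<^sup>+x. ?I x * f x \<partial>\<mu>) * emeasure \<mu> {s<..b} = (\<integral>\<^sup>+x. (\<integral>\<^sup>+y. ?I x * f x * ?I y \<partial>\<mu>) \<partial>\<mu>)"
    by (simp add: nn_integral_multc[symmetric] nn_integral_cmult_indicator)
  also have "\<dots> = (\<integral>\<^sup>+x. (\<integral>\<^sup>+y. ?I y * (indicator {s<..y} x * f x) \<partial>\<mu>) + ?I x * f x * emeasure \<mu> {s<..<x} \<partial>\<mu>)"
  proof (intro nn_integral_cong)
    fix x
    have [measurable]: "(\<lambda>y. indicator {s<..y} x :: ennreal) \<in> borel_measurable borel"
      by (simp add: indicator_def)
    show "(\<integral>\<^sup>+y. ?I x * f x * ?I y \<partial>\<mu>) = (\<integral>\<^sup>+y. ?I y * (indicator {s<..y} x * f x) \<partial>\<mu>) + ?I x * f x * emeasure \<mu> {s<..<x}"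
      unfolding split by (subst nn_integral_add) (measurable, simp add: nn_integral_cmult_indicator)
  qed
  also have "\<dots> = (\<integral>\<^sup>+x. (\<integral>\<^sup>+y. ?I y * (indicator {s<..y} x * f x) \<partial>\<mu>) \<partial>\<mu>)
      + (\<integral>\<^sup>+x. ?I x * f x * emeasure \<mu> {s<..<x} \<partial>\<mu>)"
    by (rule nn_integral_add) measurable
  also have "(\<integral>\<^sup>+x. (\<integral>\<^sup>+y. ?I y * (indicator {s<..y} x * f x) \<partial>\<mu>) \<partial>\<mu>)
      = (\<integral>\<^sup>+y. (\<integral>\<^sup>+x. ?I y * (indicator {s<..y} x * f x) \<partial>\<mu>) \<partial>\<mu>)"
    by (rule Fubini'[symmetric]) measurable
  also have "\<dots> = (\<integral>\<^sup>+y. ?I y * (\<integral>\<^sup>+x. indicator {s<..y} x * f x \<partial>\<mu>) \<partial>\<mu>)"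
    by (intro nn_integral_cong nn_integral_cmult) measurable
  finally show ?thesis
    by (simp only: mult_ac)
qed

lemma sum_pow_mul_pow_Suc:
  fixes x y :: "'a::comm_semiring_1"
  shows "x ^ Suc n + y * (\<Sum>p\<le>n. x ^ p * y ^ (n - p)) = (\<Sum>p\<le>Suc n. x ^ p * y ^ (Suc n - p))"
proof -
  have "y * (\<Sum>p\<le>n. x ^ p * y ^ (n - p)) = (\<Sum>p\<le>n. x ^ p * y ^ (Suc n - p))"
    by (auto simp: sum_distrib_left Suc_diff_le mult_ac intro!: sum.cong)
  then show ?thesis by (simp add: add.commute)
qed

lemma nn_integral_interval_power:
  fixes \<mu> :: "real measure"
  assumes fin: "finite_measure \<mu>" and sets[measurable_cong]: "sets \<mu> = sets borel"
  shows "(\<integral>\<^sup>+u. indicator {s<..b} u * (\<Sum>p\<le>n. emeasure \<mu> {s<..u} ^ p * emeasure \<mu> {s<..<u} ^ (n - p)) \<partial>\<mu>)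
         = emeasure \<mu> {s<..b} ^ Suc n"
proof (induction n arbitrary: b)
  case 0
  then show ?case using sets by simp
next
  case (Suc n)
  interpret finite_measure \<mu> by fact
  note [measurable] = borel_measurable_measure_interval[OF fin sets]
  define f where "f u = (\<Sum>p\<le>n. emeasure \<mu> {s<..u} ^ p * emeasure \<mu> {s<..<u} ^ (n - p))" for u
  have f[measurable]: "f \<in> borel_measurable borel"
    unfolding f_def by measurable
  have IH: "(\<integral>\<^sup>+u. indicator {s<..b} u * f u \<partial>\<mu>) = emeasure \<mu> {s<..b} ^ Suc n" for b
    unfolding f_def by (rule Suc.IH)
  have "emeasure \<mu> {s<..b} ^ Suc (Suc n) = (\<integral>\<^sup>+u. indicator {s<..b} u * f u \<partial>\<mu>) * emeasure \<mu> {s<..b}"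
    by (simp only: IH power_Suc2)
  also have "\<dots> = (\<integral>\<^sup>+u. indicator {s<..b} u * emeasure \<mu> {s<..u} ^ Suc n \<partial>\<mu>)
       + (\<integral>\<^sup>+u. indicator {s<..b} u * emeasure \<mu> {s<..<u} * f u \<partial>\<mu>)"
    by (subst nn_integral_interval_parts[OF fin sets f]) (simp only: IH)
  also have "\<dots> = (\<integral>\<^sup>+u. indicator {s<..b} u * (emeasure \<mu> {s<..u} ^ Suc n + emeasure \<mu> {s<..<u} * f u) \<partial>\<mu>)"
    unfolding distrib_left mult.assoc by (rule nn_integral_add[symmetric]) measurable
  also have "\<dots> = (\<integral>\<^sup>+u. indicator {s<..b} u * (\<Sum>p\<le>Suc n. emeasure \<mu> {s<..u} ^ p * emeasure \<mu> {s<..<u} ^ (Suc n - p)) \<partial>\<mu>)"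
    unfolding f_def sum_pow_mul_pow_Suc ..
  finally show ?case ..
qed

lemma sums_pow_div_pow_Suc:
  fixes x S :: real
  assumes "0 \<le> x" and "x < S"
  shows "(\<lambda>p. x ^ p / S ^ Suc p) sums (1 / (S - x))"
proof -
  have "norm (x / S) < 1" using assms by simp
  from sums_mult[OF geometric_sums[OF this], of "1 / S"]
  show ?thesis using assms by (simp add: field_simps)
qed

lemma sums_Cauchy_product_pow_div_pow:
  fixes x y S :: real
  assumes "0 \<le> x" and "x < S" and "0 \<le> y" and "y < S"
  shows "(\<lambda>n. (\<Sum>p\<le>n. x ^ p * y ^ (n - p)) / S ^ Suc (Suc n)) sums (1 / ((S - x) * (S - y)))"
proof -
  let ?a = "\<lambda>p. x ^ p / S ^ Suc p" and ?b = "\<lambda>p. y ^ p / S ^ Suc p"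
  have a: "?a sums (1 / (S - x))" and b: "?b sums (1 / (S - y))"
    using sums_pow_div_pow_Suc assms by auto
  then have "summable (\<lambda>p. norm (?a p))" and "summable (\<lambda>p. norm (?b p))"
    using assms by (simp_all add: sums_iff)
  from Cauchy_product_sums[OF this] a b
  have "(\<lambda>n. \<Sum>p\<le>n. ?a p * ?b (n - p)) sums (1 / (S - x) * (1 / (S - y)))"
    by (simp add: sums_iff)
  moreover have "(\<Sum>p\<le>n. ?a p * ?b (n - p)) = (\<Sum>p\<le>n. x ^ p * y ^ (n - p)) / S ^ Suc (Suc n)" for n
    unfolding sum_divide_distrib by (intro sum.cong refl) (simp add: power_add[symmetric])
  ultimately show ?thesis
    by simp
qed

lemma nn_integral_interval_inverse_suminf:
  fixes \<mu> :: "real measure"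
  assumes fin: "finite_measure \<mu>" and sets[measurable_cong]: "sets \<mu> = sets borel"
    and less: "measure \<mu> {s<..b} < c"
  shows "(\<integral>\<^sup>+u. indicator {s<..b} u * ennreal (1 / ((c - measure \<mu> {s<..u}) * (c - measure \<mu> {s<..<u}))) \<partial>\<mu>)
    = (\<Sum>n. ennreal (measure \<mu> {s<..b} ^ Suc n / c ^ Suc (Suc n)))"
proof -
  interpret finite_measure \<mu> by fact
  note [measurable] = borel_measurable_measure_interval[OF fin sets]
  have c: "0 < c"
    using less measure_nonneg[of \<mu> "{s<..b}"] by linarith
  \<comment> \<open>Cauchy product of two geometric series, each of whose terms integrates by the power rule\<close>
  define g where "g n u = indicator {s<..b} u * (\<Sum>p\<le>n. emeasure \<mu> {s<..u} ^ p * emeasure \<mu> {s<..<u} ^ (n - p))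
       * ennreal (1 / c ^ Suc (Suc n))" for n u
  have [measurable]: "g n \<in> borel_measurable \<mu>" for n
    unfolding g_def by measurable
  have "indicator {s<..b} u * ennreal (1 / ((c - measure \<mu> {s<..u}) * (c - measure \<mu> {s<..<u}))) = (\<Sum>n. g n u)" for u
  proof (cases "u \<in> {s<..b}")
    case True
    let ?x = "measure \<mu> {s<..u}" and ?y = "measure \<mu> {s<..<u}"
    have "?y \<le> ?x" "?x \<le> measure \<mu> {s<..b}"
      using True by (auto intro!: finite_measure_mono simp: sets)
    then have xy: "0 \<le> ?x" "?x < c" "0 \<le> ?y" "?y < c"
      using less by auto
    have "g n u = ennreal ((\<Sum>p\<le>n. ?x ^ p * ?y ^ (n - p)) / c ^ Suc (Suc n))" for n
      using True xy c
      by (simp add: g_def emeasure_eq_measure ennreal_power ennreal_mult[symmetric] sum_nonneg divide_inverse)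
    moreover have "(\<Sum>n. ennreal ((\<Sum>p\<le>n. ?x ^ p * ?y ^ (n - p)) / c ^ Suc (Suc n))) = ennreal (1 / ((c - ?x) * (c - ?y)))"
      using xy c by (intro suminf_ennreal_eq sums_Cauchy_product_pow_div_pow) (auto intro!: sum_nonneg divide_nonneg_pos)
    ultimately show ?thesis
      using True by simp
  qed (simp add: g_def)
  then have "(\<integral>\<^sup>+u. indicator {s<..b} u * ennreal (1 / ((c - measure \<mu> {s<..u}) * (c - measure \<mu> {s<..<u}))) \<partial>\<mu>)
      = (\<Sum>n. integral\<^sup>N \<mu> (g n))"
    by (simp add: nn_integral_suminf)
  moreover have "integral\<^sup>N \<mu> (g n) = ennreal (measure \<mu> {s<..b} ^ Suc n / c ^ Suc (Suc n))" for n
  proof -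
    have "integral\<^sup>N \<mu> (g n) = (\<integral>\<^sup>+u. indicator {s<..b} u *
        (\<Sum>p\<le>n. emeasure \<mu> {s<..u} ^ p * emeasure \<mu> {s<..<u} ^ (n - p)) \<partial>\<mu>) * ennreal (1 / c ^ Suc (Suc n))"
      unfolding g_def by (rule nn_integral_multc) measurable
    then show ?thesis
      using c by (simp only: nn_integral_interval_power[OF fin sets])
        (simp add: emeasure_eq_measure ennreal_power ennreal_mult[symmetric] divide_inverse)
  qed
  ultimately show ?thesis
    by simp
qed

lemma nn_integral_interval_inverse:
  fixes \<mu> :: "real measure"
  assumes fin: "finite_measure \<mu>" and sets: "sets \<mu> = sets borel"
    and less: "measure \<mu> {s<..b} < c"
  shows "ennreal (1 / c) + (\<integral>\<^sup>+u. indicator {s<..b} u *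
            ennreal (1 / ((c - measure \<mu> {s<..u}) * (c - measure \<mu> {s<..<u}))) \<partial>\<mu>)
         = ennreal (1 / (c - measure \<mu> {s<..b}))"
proof -
  let ?m = "measure \<mu> {s<..b}"
  have m: "0 \<le> ?m" "?m < c" and c: "0 < c"
    using less measure_nonneg[of \<mu> "{s<..b}"] by linarith+
  have "(\<lambda>p. ?m ^ p / c ^ Suc p) sums (1 / (c - ?m))"
    using m by (rule sums_pow_div_pow_Suc)
  then have "(\<lambda>n. ?m ^ Suc n / c ^ Suc (Suc n)) sums (1 / (c - ?m) - 1 / c)"
    using sums_Suc_iff[of "\<lambda>p. ?m ^ p / c ^ Suc p" "1 / (c - ?m) - 1 / c"] by simp
  then have "(\<Sum>n. ennreal (?m ^ Suc n / c ^ Suc (Suc n))) = ennreal (1 / (c - ?m) - 1 / c)"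
    using m c by (intro suminf_ennreal_eq) auto
  moreover have "ennreal (1 / c) + ennreal (1 / (c - ?m) - 1 / c) = ennreal (1 / (c - ?m))"
    using m c by (subst ennreal_plus[symmetric]) (auto intro!: frac_le)
  ultimately show ?thesis
    by (simp add: nn_integral_interval_inverse_suminf[OF assms])
qed

lemma nn_integral_interval_inverse_open:
  fixes \<mu> :: "real measure"
  assumes fin: "finite_measure \<mu>" and sets[measurable_cong]: "sets \<mu> = sets borel"
    and less: "measure \<mu> {s<..<b} < c"
  shows "ennreal (1 / c) + (\<integral>\<^sup>+u. indicator {s<..<b} u *
            ennreal (1 / ((c - measure \<mu> {s<..u}) * (c - measure \<mu> {s<..<u}))) \<partial>\<mu>)
         = ennreal (1 / (c - measure \<mu> {s<..<b}))"
proof -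
  \<comment> \<open>Restricted to \<open>{..<b}\<close>, the interval \<open>{s<..b}\<close> has the mass of \<open>{s<..<b}\<close>.\<close>
  let ?\<nu> = "density \<mu> (indicator {..<b})"
  have fin': "finite_measure ?\<nu>" and sets': "sets ?\<nu> = sets borel"
    using finite_measure.finite_measure_restricted[OF fin, of "{..<b}"] sets by auto
  have \<nu>: "measure ?\<nu> A = measure \<mu> ({..<b} \<inter> A)" if "A \<in> sets borel" for A
    using that sets by (simp add: measure_restricted)
  note [measurable] = borel_measurable_measure_interval[OF fin' sets']
  have "(\<integral>\<^sup>+u. indicator {s<..b} u *
            ennreal (1 / ((c - measure ?\<nu> {s<..u}) * (c - measure ?\<nu> {s<..<u}))) \<partial>?\<nu>)
        = (\<integral>\<^sup>+u. indicator {..<b} u * (indicator {s<..b} u *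
            ennreal (1 / ((c - measure ?\<nu> {s<..u}) * (c - measure ?\<nu> {s<..<u})))) \<partial>\<mu>)"
    (is "?I = _")
    by (rule nn_integral_density) measurable
  also have "\<dots> = (\<integral>\<^sup>+u. indicator {s<..<b} u *
            ennreal (1 / ((c - measure \<mu> {s<..u}) * (c - measure \<mu> {s<..<u}))) \<partial>\<mu>)"
    (is "_ = ?J")
  proof (intro nn_integral_cong)
    fix u
    have "{..<b} \<inter> {s<..u} = {s<..u}" and "{..<b} \<inter> {s<..<u} = {s<..<u}" if "u < b"
      using that by auto
    then show "indicator {..<b} u * (indicator {s<..b} u *
            ennreal (1 / ((c - measure ?\<nu> {s<..u}) * (c - measure ?\<nu> {s<..<u}))))
        = indicator {s<..<b} u * ennreal (1 / ((c - measure \<mu> {s<..u}) * (c - measure \<mu> {s<..<u})))"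
      by (auto simp: \<nu> split: split_indicator)
  qed
  finally have "?I = ?J" .
  moreover have "measure ?\<nu> {s<..b} = measure \<mu> {s<..<b}"
  proof -
    have "{..<b} \<inter> {s<..b} = {s<..<b}"
      by auto
    then show ?thesis
      by (simp add: \<nu>)
  qed
  ultimately show ?thesis
    using nn_integral_interval_inverse[OF fin' sets', of s b c] less by simp
qed

context prob_space
begin

lemma surv_antimono:
  assumes [measurable]: "X \<in> borel_measurable M" and "u \<le> v"
  shows "surv M X v \<le> surv M X u"
  unfolding surv_def using assms(2) by (intro finite_measure_mono) auto

lemma surv_left_eq:
  assumes [measurable]: "X \<in> borel_measurable M"
  shows "surv_left M X u = measure M {\<omega> \<in> space M. u \<le> X \<omega>}"
proof -
  have "(surv M X \<longlongrightarrow> measure M {\<omega> \<in> space M. u \<le> X \<omega>}) (at_left u)"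
  proof (rule tendsto_at_left_sequentially[of "u - 1"])
    fix v :: "nat \<Rightarrow> real"
    assume less: "\<And>n. v n < u" and "incseq v" and lim: "v \<longlonglongrightarrow> u"
    have "(\<lambda>n. measure M {\<omega> \<in> space M. v n < X \<omega>}) \<longlonglongrightarrow> measure M (\<Inter>n. {\<omega> \<in> space M. v n < X \<omega>})"
      using \<open>incseq v\<close> by (intro finite_Lim_measure_decseq) (auto simp: decseq_def incseq_def intro: le_less_trans)
    moreover have "(\<Inter>n. {\<omega> \<in> space M. v n < X \<omega>}) = {\<omega> \<in> space M. u \<le> X \<omega>}"
    proof (intro set_eqI iffI)
      fix \<omega> assume "\<omega> \<in> (\<Inter>n. {\<omega> \<in> space M. v n < X \<omega>})"
      then have "\<forall>n. v n \<le> X \<omega>" and "\<omega> \<in> space M" by (auto intro: less_imp_le)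
      then show "\<omega> \<in> {\<omega> \<in> space M. u \<le> X \<omega>}"
        using LIMSEQ_le_const2[OF lim] by auto
    qed (use less in \<open>auto intro: less_le_trans\<close>)
    ultimately show "(\<lambda>n. surv M X (v n)) \<longlonglongrightarrow> measure M {\<omega> \<in> space M. u \<le> X \<omega>}"
      by (simp only: surv_def)
  qed simp
  then show ?thesis
    unfolding surv_left_def by (rule tendsto_Lim[rotated]) simp
qed

lemma borel_measurable_surv:
  assumes [measurable]: "X \<in> borel_measurable M"
  shows "surv M X \<in> borel_measurable borel"
proof -
  have "mono (\<lambda>u. - surv M X u)"
    by (auto intro!: monoI surv_antimono)
  then have "(\<lambda>u. - surv M X u) \<in> borel_measurable borel"
    by (rule borel_measurable_mono)
  then show ?thesis
    by simp
qed

lemma borel_measurable_surv_left: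
  assumes [measurable]: "X \<in> borel_measurable M"
  shows "surv_left M X \<in> borel_measurable borel"
proof -
  have "mono (\<lambda>u. - surv_left M X u)"
    by (auto intro!: monoI finite_measure_mono simp: surv_left_eq)
  then have "(\<lambda>u. - surv_left M X u) \<in> borel_measurable borel"
    by (rule borel_measurable_mono)
  then show ?thesis
    by simp
qed

lemma surv_left_le_surv_left:
  assumes [measurable]: "X \<in> borel_measurable M" "Y \<in> borel_measurable M"
    and "\<forall>\<omega>\<in>space M. Y \<omega> \<le> X \<omega>"
  shows "surv_left M Y u \<le> surv_left M X u"
proof -
  have "{\<omega> \<in> space M. u \<le> Y \<omega>} \<subseteq> {\<omega> \<in> space M. u \<le> X \<omega>}"
    using assms(3) by (auto intro: order.trans)
  then show ?thesis
    by (simp add: surv_left_eq finite_measure_mono)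
qed

lemma surv_left_ratio_bounded:
  assumes [measurable]: "X \<in> borel_measurable M" "Y \<in> borel_measurable M"
    and "\<forall>\<omega>\<in>space M. Y \<omega> \<le> X \<omega>"
  shows "0 \<le> surv_left M Y u / surv_left M X u" and "surv_left M Y u / surv_left M X u \<le> 1"
  using surv_left_le_surv_left[OF assms]
  by (auto simp: surv_left_eq divide_le_eq_1 zero_less_measure_iff)

lemma AE_surv_left_pos:
  assumes [measurable]: "X \<in> borel_measurable M"
  shows "AE \<omega> in M. 0 < surv_left M X (X \<omega>)"
proof -
  define Z where "Z = {r. measure M {\<omega> \<in> space M. r \<le> X \<omega>} = 0}"
  have up: "r' \<in> Z" if "r \<in> Z" "r \<le> r'" for r r'
  proof -
    have "measure M {\<omega> \<in> space M. r' \<le> X \<omega>} \<le> measure M {\<omega> \<in> space M. r \<le> X \<omega>}"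
      using that(2) by (intro finite_measure_mono) auto
    then show ?thesis
      using that(1) by (simp add: Z_def measure_le_0_iff)
  qed
  \<comment> \<open>\<open>Z\<close> is an up-set of null tails, covered by the tails at its rational points and its minimum\<close>
  define R where "R = Z \<inter> insert (Inf Z) \<rat>"
  have "countable R"
    unfolding R_def using countable_rat by (blast intro: countable_subset)
  then have null: "(\<Union>r\<in>R. {\<omega> \<in> space M. r \<le> X \<omega>}) \<in> null_sets M"
    by (rule null_sets_UN') (auto simp: R_def Z_def emeasure_eq_measure null_sets_def)
  have "X \<omega> \<in> Z \<Longrightarrow> \<exists>r\<in>R. r \<le> X \<omega>" for \<omega>
  proof (cases "\<forall>z\<in>Z. X \<omega> \<le> z")
    case True
    then show "X \<omega> \<in> Z \<Longrightarrow> \<exists>r\<in>R. r \<le> X \<omega>"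
      using cInf_eq_minimum[of "X \<omega>" Z] by (auto simp: R_def)
  next
    case False
    then obtain z q where "z \<in> Z" "q \<in> \<rat>" "z < q" "q < X \<omega>"
      using Rats_dense_in_real by (meson not_le)
    then show "\<exists>r\<in>R. r \<le> X \<omega>"
      using up[of z q] by (auto simp: R_def intro!: bexI[of _ q])
  qed
  then have "{\<omega> \<in> space M. \<not> 0 < surv_left M X (X \<omega>)} \<subseteq> (\<Union>r\<in>R. {\<omega> \<in> space M. r \<le> X \<omega>})"
    by (auto simp: surv_left_eq Z_def measure_le_0_iff not_less)
  then show ?thesis
    by (rule AE_I'[OF null])
qed

lemma measure_distr_greaterThanAtMost:
  assumes [measurable]: "X \<in> borel_measurable M" and "s \<le> u"
  shows "measure (distr M borel X) {s<..u} = surv M X s - surv M X u"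
proof -
  have "X -` {s<..u} \<inter> space M = {\<omega> \<in> space M. s < X \<omega>} - {\<omega> \<in> space M. u < X \<omega>}"
    using assms(2) by auto
  then show ?thesis
    using assms(2) by (simp add: measure_distr surv_def finite_measure_Diff subset_eq)
qed

lemma measure_distr_greaterThanLessThan:
  assumes [measurable]: "X \<in> borel_measurable M" and "s < u"
  shows "measure (distr M borel X) {s<..<u} = surv M X s - surv_left M X u"
proof -
  have "X -` {s<..<u} \<inter> space M = {\<omega> \<in> space M. s < X \<omega>} - {\<omega> \<in> space M. u \<le> X \<omega>}"
    using assms(2) by auto
  then show ?thesis
    using assms(2) by (simp add: measure_distr surv_def surv_left_eq finite_measure_Diff subset_eq)
qed

lemma inverse_surv_increment:
  assumes [measurable]: "X \<in> borel_measurable M" and "s \<le> w" and "0 < surv M X w"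
  shows "ennreal (1 / surv M X s)
      + (\<integral>\<^sup>+\<omega>. indicator {s<..w} (X \<omega>) * ennreal (1 / (surv M X (X \<omega>) * surv_left M X (X \<omega>))) \<partial>M)
    = ennreal (1 / surv M X w)"
proof -
  let ?\<mu> = "distr M borel X" and ?c = "surv M X s"
  have fin: "finite_measure ?\<mu>" and sets: "sets ?\<mu> = sets borel"
    using prob_space_distr[of X borel] by (auto simp: prob_space_def)
  note [measurable] = borel_measurable_measure_interval[OF fin sets] borel_measurable_surv borel_measurable_surv_left
  have "(\<integral>\<^sup>+u. indicator {s<..w} u * ennreal (1 / ((?c - measure ?\<mu> {s<..u}) * (?c - measure ?\<mu> {s<..<u}))) \<partial>?\<mu>)
      = (\<integral>\<^sup>+u. indicator {s<..w} u * ennreal (1 / (surv M X u * surv_left M X u)) \<partial>?\<mu>)"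
    by (intro nn_integral_cong)
      (auto simp: measure_distr_greaterThanAtMost measure_distr_greaterThanLessThan split: split_indicator)
  also have "\<dots> = (\<integral>\<^sup>+\<omega>. indicator {s<..w} (X \<omega>) * ennreal (1 / (surv M X (X \<omega>) * surv_left M X (X \<omega>))) \<partial>M)"
    by (rule nn_integral_distr) measurable
  finally show ?thesis
    using nn_integral_interval_inverse[OF fin sets, of s w ?c] assms
    by (simp add: measure_distr_greaterThanAtMost)
qed

lemma inverse_surv_left_increment:
  assumes [measurable]: "X \<in> borel_measurable M" and "s < y" and "0 < surv_left M X y"
  shows "ennreal (1 / surv M X s)
      + (\<integral>\<^sup>+\<omega>. indicator {s<..<y} (X \<omega>) * ennreal (1 / (surv M X (X \<omega>) * surv_left M X (X \<omega>))) \<partial>M)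
    = ennreal (1 / surv_left M X y)"
proof -
  let ?\<mu> = "distr M borel X" and ?c = "surv M X s"
  have fin: "finite_measure ?\<mu>" and sets: "sets ?\<mu> = sets borel"
    using prob_space_distr[of X borel] by (auto simp: prob_space_def)
  note [measurable] = borel_measurable_measure_interval[OF fin sets] borel_measurable_surv borel_measurable_surv_left
  have "(\<integral>\<^sup>+u. indicator {s<..<y} u * ennreal (1 / ((?c - measure ?\<mu> {s<..u}) * (?c - measure ?\<mu> {s<..<u}))) \<partial>?\<mu>)
      = (\<integral>\<^sup>+u. indicator {s<..<y} u * ennreal (1 / (surv M X u * surv_left M X u)) \<partial>?\<mu>)"
    by (intro nn_integral_cong)
      (auto simp: measure_distr_greaterThanAtMost measure_distr_greaterThanLessThan split: split_indicator)
  also have "\<dots> = (\<integral>\<^sup>+\<omega>. indicator {s<..<y} (X \<omega>) * ennreal (1 / (surv M X (X \<omega>) * surv_left M X (X \<omega>))) \<partial>M)"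
    by (rule nn_integral_distr) measurable
  finally show ?thesis
    using nn_integral_interval_inverse_open[OF fin sets, of s y ?c] assms
    by (simp add: measure_distr_greaterThanLessThan)
qed

lemma AE_inverse_surv_increment:
  assumes [measurable]: "X \<in> borel_measurable M" and "s \<le> w"
  shows "AE \<omega>' in M. indicator {s<..} (X \<omega>') * ennreal (1 / surv M X s)
      + (\<integral>\<^sup>+\<omega>. indicator {s<..w} (X \<omega>) * indicator {..<X \<omega>'} (X \<omega>)
            * ennreal (1 / (surv M X (X \<omega>) * surv_left M X (X \<omega>))) \<partial>M)
    = indicator {w<..} (X \<omega>') * ennreal (1 / surv M X w)
      + indicator {s<..w} (X \<omega>') * ennreal (1 / surv_left M X (X \<omega>'))"
  using AE_surv_left_pos[OF assms(1)]
proof eventually_elim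
  fix \<omega>' assume pos: "0 < surv_left M X (X \<omega>')"
  let ?x = "X \<omega>'" and ?k = "\<lambda>\<omega>. ennreal (1 / (surv M X (X \<omega>) * surv_left M X (X \<omega>)))"
  consider "?x \<le> s" | "s < ?x" "?x \<le> w" | "w < ?x"
    by fastforce
  then show "indicator {s<..} ?x * ennreal (1 / surv M X s)
      + (\<integral>\<^sup>+\<omega>. indicator {s<..w} (X \<omega>) * indicator {..<?x} (X \<omega>) * ?k \<omega> \<partial>M)
    = indicator {w<..} ?x * ennreal (1 / surv M X w) + indicator {s<..w} ?x * ennreal (1 / surv_left M X ?x)"
  proof cases
    case 1
    then have "(\<integral>\<^sup>+\<omega>. indicator {s<..w} (X \<omega>) * indicator {..<?x} (X \<omega>) * ?k \<omega> \<partial>M) = 0"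
      by (intro nn_integral_zero') (auto split: split_indicator)
    then show ?thesis
      using 1 assms(2) by simp
  next
    case 2
    have "(\<integral>\<^sup>+\<omega>. indicator {s<..w} (X \<omega>) * indicator {..<?x} (X \<omega>) * ?k \<omega> \<partial>M)
        = (\<integral>\<^sup>+\<omega>. indicator {s<..<?x} (X \<omega>) * ?k \<omega> \<partial>M)"
      using 2 by (intro nn_integral_cong) (auto split: split_indicator)
    then show ?thesis
      using 2 inverse_surv_left_increment[OF assms(1) _ pos, of s] by simp
  next
    case 3
    have "surv_left M X ?x \<le> surv M X w"
      using 3 by (auto simp: surv_left_eq surv_def intro!: finite_measure_mono)
    then have "0 < surv M X w"
      using pos by linarith
    have "(\<integral>\<^sup>+\<omega>. indicator {s<..w} (X \<omega>) * indicator {..<?x} (X \<omega>) * ?k \<omega> \<partial>M)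
        = (\<integral>\<^sup>+\<omega>. indicator {s<..w} (X \<omega>) * ?k \<omega> \<partial>M)"
      using 3 by (intro nn_integral_cong) (auto split: split_indicator)
    then show ?thesis
      using 3 assms(2) inverse_surv_increment[OF assms(1,2) \<open>0 < surv M X w\<close>] by simp
  qed
qed

end

definition cond_prob_surv :: "'a measure \<Rightarrow> ('a \<Rightarrow> real) \<Rightarrow> 'a set \<Rightarrow> real \<Rightarrow> real" where
  "cond_prob_surv M X A u = measure M (A \<inter> {\<omega> \<in> space M. u < X \<omega>}) / surv M X u"

context prob_space
begin

lemma cond_prob_surv_nonneg: "0 \<le> cond_prob_surv M X A u"
  by (simp add: cond_prob_surv_def surv_def)

lemma cond_prob_surv_le_1:
  assumes "X \<in> borel_measurable M"
  shows "cond_prob_surv M X A u \<le> 1"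
proof -
  have "measure M (A \<inter> {\<omega> \<in> space M. u < X \<omega>}) \<le> measure M {\<omega> \<in> space M. u < X \<omega>}"
    using assms by (intro finite_measure_mono) auto
  then show ?thesis
    by (auto simp: cond_prob_surv_def surv_def divide_le_eq_1 zero_less_measure_iff)
qed

lemma borel_measurable_cond_prob_surv:
  assumes [measurable]: "X \<in> borel_measurable M" "A \<in> sets M"
  shows "cond_prob_surv M X A \<in> borel_measurable borel"
proof -
  have "mono (\<lambda>u. - measure M (A \<inter> {\<omega> \<in> space M. u < X \<omega>}))"
    by (auto intro!: monoI finite_measure_mono)
  then have "(\<lambda>u. - measure M (A \<inter> {\<omega> \<in> space M. u < X \<omega>})) \<in> borel_measurable borel"
    by (rule borel_measurable_mono)
  then show ?thesis
    unfolding cond_prob_surv_def[abs_def] using borel_measurable_surv[OF assms(1)] by simp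
qed

lemma ennreal_cond_prob_surv_mult:
  assumes [measurable]: "X \<in> borel_measurable M" "A \<in> sets M" and "0 \<le> c"
  shows "ennreal (cond_prob_surv M X A u * c)
    = (\<integral>\<^sup>+\<omega>. indicator A \<omega> * (indicator {u<..} (X \<omega>) * ennreal (c / surv M X u)) \<partial>M)"
proof -
  have "(\<integral>\<^sup>+\<omega>. indicator A \<omega> * indicator {u<..} (X \<omega>) \<partial>M)
      = emeasure M (A \<inter> {\<omega> \<in> space M. u < X \<omega>})"
  proof -
    have "(\<integral>\<^sup>+\<omega>. indicator A \<omega> * indicator {u<..} (X \<omega>) \<partial>M)
        = (\<integral>\<^sup>+\<omega>. indicator (A \<inter> {\<omega> \<in> space M. u < X \<omega>}) \<omega> \<partial>M)"
      by (intro nn_integral_cong) (auto split: split_indicator)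
    also have "\<dots> = emeasure M (A \<inter> {\<omega> \<in> space M. u < X \<omega>})"
      by (rule nn_integral_indicator) measurable
    finally show ?thesis .
  qed
  moreover have "(\<integral>\<^sup>+\<omega>. indicator A \<omega> * (indicator {u<..} (X \<omega>) * ennreal (c / surv M X u)) \<partial>M)
      = (\<integral>\<^sup>+\<omega>. indicator A \<omega> * indicator {u<..} (X \<omega>) \<partial>M) * ennreal (c / surv M X u)"
    unfolding mult.assoc[symmetric] by (rule nn_integral_multc) measurable
  ultimately show ?thesis
    using assms(3) by (simp add: cond_prob_surv_def emeasure_eq_measure ennreal_mult'[symmetric] surv_def)
qed

lemma nn_integral_cond_prob_surv_div_surv_left:
  assumes [measurable]: "X \<in> borel_measurable M" "A \<in> sets M"
  shows "(\<integral>\<^sup>+\<omega>. indicator {s<..w} (X \<omega>) * ennreal (cond_prob_surv M X A (X \<omega>) / surv_left M X (X \<omega>)) \<partial>M)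
    = (\<integral>\<^sup>+\<omega>'. indicator A \<omega>' * (\<integral>\<^sup>+\<omega>. indicator {s<..w} (X \<omega>) * indicator {..<X \<omega>'} (X \<omega>)
        * ennreal (1 / (surv M X (X \<omega>) * surv_left M X (X \<omega>))) \<partial>M) \<partial>M)"
proof -
  interpret pair_sigma_finite M M
    by unfold_locales
  note [measurable] = borel_measurable_surv borel_measurable_surv_left
  define k where "k \<omega> = ennreal (1 / (surv M X (X \<omega>) * surv_left M X (X \<omega>)))" for \<omega>
  have [measurable]: "k \<in> borel_measurable M"
    unfolding k_def by measurable
  have [measurable]: "Measurable.pred (M \<Otimes>\<^sub>M M) (\<lambda>p. X (fst p) \<in> {..<X (snd p)})"
    and [measurable]: "Measurable.pred M (\<lambda>\<omega>'. x \<in> {..<X \<omega>'})" for x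
    by simp_all
  have "ennreal (cond_prob_surv M X A (X \<omega>) / surv_left M X (X \<omega>))
      = (\<integral>\<^sup>+\<omega>'. indicator A \<omega>' * indicator {..<X \<omega>'} (X \<omega>) * k \<omega> \<partial>M)" for \<omega>
    using ennreal_cond_prob_surv_mult[of X A "1 / surv_left M X (X \<omega>)" "X \<omega>"]
    by (simp add: k_def surv_left_eq mult.commute mult.assoc indicator_def)
  then have "(\<integral>\<^sup>+\<omega>. indicator {s<..w} (X \<omega>) * ennreal (cond_prob_surv M X A (X \<omega>) / surv_left M X (X \<omega>)) \<partial>M)
      = (\<integral>\<^sup>+\<omega>. (\<integral>\<^sup>+\<omega>'. indicator {s<..w} (X \<omega>) * (indicator A \<omega>' * indicator {..<X \<omega>'} (X \<omega>) * k \<omega>) \<partial>M) \<partial>M)"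
    by (simp only:) (intro nn_integral_cong nn_integral_cmult[symmetric], measurable)
  also have "\<dots> = (\<integral>\<^sup>+\<omega>'. (\<integral>\<^sup>+\<omega>. indicator A \<omega>' * (indicator {s<..w} (X \<omega>) * indicator {..<X \<omega>'} (X \<omega>) * k \<omega>) \<partial>M) \<partial>M)"
    by (subst Fubini') (measurable, simp add: mult_ac)
  also have "\<dots> = (\<integral>\<^sup>+\<omega>'. indicator A \<omega>' * (\<integral>\<^sup>+\<omega>. indicator {s<..w} (X \<omega>) * indicator {..<X \<omega>'} (X \<omega>) * k \<omega> \<partial>M) \<partial>M)"
    by (intro nn_integral_cong nn_integral_cmult) measurable
  finally show ?thesis
    by (simp only: k_def)
qed

lemma cond_prob_surv_increment:
  assumes [measurable]: "X \<in> borel_measurable M" "A \<in> sets M" and "s \<le> w"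
  shows "ennreal (cond_prob_surv M X A s)
      + (\<integral>\<^sup>+\<omega>. indicator {s<..w} (X \<omega>) * ennreal (cond_prob_surv M X A (X \<omega>) / surv_left M X (X \<omega>)) \<partial>M)
    = ennreal (cond_prob_surv M X A w)
      + (\<integral>\<^sup>+\<omega>. indicator A \<omega> * indicator {s<..w} (X \<omega>) * ennreal (1 / surv_left M X (X \<omega>)) \<partial>M)"
proof -
  note [measurable] = borel_measurable_surv borel_measurable_surv_left
  have [measurable]: "Measurable.pred (M \<Otimes>\<^sub>M M) (\<lambda>p. X (snd p) \<in> {..<X (fst p)})"
    by simp
  let ?\<Psi> = "\<lambda>\<omega>'. \<integral>\<^sup>+\<omega>. indicator {s<..w} (X \<omega>) * indicator {..<X \<omega>'} (X \<omega>)
        * ennreal (1 / (surv M X (X \<omega>) * surv_left M X (X \<omega>))) \<partial>M"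
  have "ennreal (cond_prob_surv M X A s)
      + (\<integral>\<^sup>+\<omega>. indicator {s<..w} (X \<omega>) * ennreal (cond_prob_surv M X A (X \<omega>) / surv_left M X (X \<omega>)) \<partial>M)
    = (\<integral>\<^sup>+\<omega>'. indicator A \<omega>' * (indicator {s<..} (X \<omega>') * ennreal (1 / surv M X s) + ?\<Psi> \<omega>') \<partial>M)"
    unfolding nn_integral_cond_prob_surv_div_surv_left[OF assms(1,2)]
      ennreal_cond_prob_surv_mult[of X A 1 s, simplified] distrib_left
    by (rule nn_integral_add[symmetric]) measurable
  also have "\<dots> = (\<integral>\<^sup>+\<omega>'. indicator A \<omega>' * (indicator {w<..} (X \<omega>') * ennreal (1 / surv M X w)
        + indicator {s<..w} (X \<omega>') * ennreal (1 / surv_left M X (X \<omega>'))) \<partial>M)"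
    using AE_inverse_surv_increment[OF assms(1,3)] by (intro nn_integral_cong_AE) auto
  also have "\<dots> = ennreal (cond_prob_surv M X A w)
      + (\<integral>\<^sup>+\<omega>. indicator A \<omega> * indicator {s<..w} (X \<omega>) * ennreal (1 / surv_left M X (X \<omega>)) \<partial>M)"
    unfolding ennreal_cond_prob_surv_mult[of X A 1 w, simplified] distrib_left mult.assoc
    by (rule nn_integral_add) measurable
  finally show ?thesis .
qed

lemma ennreal_mult_surv:
  assumes [measurable]: "Y \<in> borel_measurable M" and "0 \<le> c"
  shows "ennreal (c * surv M Y s) = (\<integral>\<^sup>+\<omega>. indicator {s<..} (Y \<omega>) * ennreal c \<partial>M)"
proof -
  have "(\<integral>\<^sup>+\<omega>. indicator {s<..} (Y \<omega>) * ennreal c \<partial>M) = (\<integral>\<^sup>+\<omega>. indicator {s<..} (Y \<omega>) \<partial>M) * ennreal c"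
    by (rule nn_integral_multc) measurable
  also have "(\<integral>\<^sup>+\<omega>. indicator {s<..} (Y \<omega>) \<partial>M) = (\<integral>\<^sup>+\<omega>. indicator {\<omega> \<in> space M. s < Y \<omega>} \<omega> \<partial>M)"
    by (intro nn_integral_cong) (auto split: split_indicator)
  also have "\<dots> = emeasure M {\<omega> \<in> space M. s < Y \<omega>}"
    by (rule nn_integral_indicator) measurable
  finally show ?thesis
    using assms(2) by (simp add: surv_def emeasure_eq_measure ennreal_mult' mult.commute)
qed

lemma nn_integral_interval_mult_surv_left:
  assumes [measurable]: "X \<in> borel_measurable M" "Y \<in> borel_measurable M" "h \<in> borel_measurable M"
  shows "(\<integral>\<^sup>+\<omega>. indicator {s<..t} (X \<omega>) * h \<omega> * ennreal (surv_left M Y (X \<omega>)) \<partial>M)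
    = (\<integral>\<^sup>+\<omega>'. (\<integral>\<^sup>+\<omega>. indicator {s<..min (Y \<omega>') t} (X \<omega>) * h \<omega> \<partial>M) \<partial>M)"
proof -
  interpret pair_sigma_finite M M
    by unfold_locales
  have [measurable]: "Measurable.pred (M \<Otimes>\<^sub>M M) (\<lambda>p. X (fst p) \<in> {s<..min (Y (snd p)) t})"
    and [measurable]: "Measurable.pred M (\<lambda>\<omega>'. x \<in> {..Y \<omega>'})" for x
    by simp_all
  have "ennreal (surv_left M Y u) = (\<integral>\<^sup>+\<omega>'. indicator {\<omega> \<in> space M. u \<le> Y \<omega>} \<omega>' \<partial>M)" for u
    by (simp add: surv_left_eq emeasure_eq_measure)
  also have "\<dots> u = (\<integral>\<^sup>+\<omega>'. indicator {..Y \<omega>'} u \<partial>M)" for u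
    by (intro nn_integral_cong) (auto split: split_indicator)
  finally have "(\<integral>\<^sup>+\<omega>. indicator {s<..t} (X \<omega>) * h \<omega> * ennreal (surv_left M Y (X \<omega>)) \<partial>M)
      = (\<integral>\<^sup>+\<omega>. (\<integral>\<^sup>+\<omega>'. indicator {s<..t} (X \<omega>) * h \<omega> * indicator {..Y \<omega>'} (X \<omega>) \<partial>M) \<partial>M)"
    by (simp only:) (intro nn_integral_cong nn_integral_cmult[symmetric], measurable)
  also have "\<dots> = (\<integral>\<^sup>+\<omega>. (\<integral>\<^sup>+\<omega>'. indicator {s<..min (Y \<omega>') t} (X \<omega>) * h \<omega> \<partial>M) \<partial>M)"
    by (intro nn_integral_cong) (auto split: split_indicator)
  also have "\<dots> = (\<integral>\<^sup>+\<omega>'. (\<integral>\<^sup>+\<omega>. indicator {s<..min (Y \<omega>') t} (X \<omega>) * h \<omega> \<partial>M) \<partial>M)"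
    by (rule Fubini'[symmetric]) measurable
  finally show ?thesis .
qed

lemma cond_prob_surv_integrated_increment:
  assumes [measurable]: "X \<in> borel_measurable M" "Y \<in> borel_measurable M" "A \<in> sets M"
    and A_le: "\<forall>\<omega>\<in>A. X \<omega> \<le> t" and "s \<le> t"
  shows "ennreal (cond_prob_surv M X A s * surv M Y s)
      + (\<integral>\<^sup>+\<omega>. indicator {s<..t} (X \<omega>) * ennreal (cond_prob_surv M X A (X \<omega>) / surv_left M X (X \<omega>))
          * ennreal (surv_left M Y (X \<omega>)) \<partial>M)
    = (\<integral>\<^sup>+\<omega>. indicator {s<..t} (Y \<omega>) * ennreal (cond_prob_surv M X A (Y \<omega>)) \<partial>M)
      + (\<integral>\<^sup>+\<omega>. indicator {s<..t} (X \<omega>) * (indicator A \<omega> * ennreal (1 / surv_left M X (X \<omega>)))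
          * ennreal (surv_left M Y (X \<omega>)) \<partial>M)"
proof -
  let ?r = "cond_prob_surv M X A"
  note [measurable] = borel_measurable_surv_left borel_measurable_cond_prob_surv
  have [measurable]: "Measurable.pred (M \<Otimes>\<^sub>M M) (\<lambda>p. X (snd p) \<in> {s<..min (Y (fst p)) t})"
    by simp
  have "?r u = 0" if "t \<le> u" for u
  proof -
    have "A \<inter> {\<omega> \<in> space M. u < X \<omega>} = {}"
      using A_le that by force
    then show ?thesis
      by (simp add: cond_prob_surv_def)
  qed
  then have truncate: "(\<integral>\<^sup>+\<omega>. indicator {s<..t} (Y \<omega>) * ennreal (?r (Y \<omega>)) \<partial>M)
      = (\<integral>\<^sup>+\<omega>'. indicator {s<..} (Y \<omega>') * ennreal (?r (min (Y \<omega>') t)) \<partial>M)"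
    by (intro nn_integral_cong) (auto simp: min_def split: split_indicator)
  have surv_Y: "ennreal (?r s * surv M Y s) = (\<integral>\<^sup>+\<omega>'. indicator {s<..} (Y \<omega>') * ennreal (?r s) \<partial>M)"
    by (rule ennreal_mult_surv[OF assms(2) cond_prob_surv_nonneg])
  \<comment> \<open>\<open>\<omega>'\<close> is an independent copy; the Duhamel identity is used at \<open>w = min (Y \<omega>') t\<close>\<close>
  have "ennreal (?r s * surv M Y s)
      + (\<integral>\<^sup>+\<omega>. indicator {s<..t} (X \<omega>) * ennreal (?r (X \<omega>) / surv_left M X (X \<omega>))
          * ennreal (surv_left M Y (X \<omega>)) \<partial>M)
    = (\<integral>\<^sup>+\<omega>'. indicator {s<..} (Y \<omega>') * ennreal (?r s)
        + (\<integral>\<^sup>+\<omega>. indicator {s<..min (Y \<omega>') t} (X \<omega>) * ennreal (?r (X \<omega>) / surv_left M X (X \<omega>)) \<partial>M) \<partial>M)"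
    unfolding surv_Y
    by (subst nn_integral_interval_mult_surv_left[OF assms(1,2)], measurable,
        rule nn_integral_add[symmetric], measurable)
  also have "\<dots> = (\<integral>\<^sup>+\<omega>'. indicator {s<..} (Y \<omega>') * ennreal (?r (min (Y \<omega>') t))
        + (\<integral>\<^sup>+\<omega>. indicator {s<..min (Y \<omega>') t} (X \<omega>) * (indicator A \<omega> * ennreal (1 / surv_left M X (X \<omega>))) \<partial>M) \<partial>M)"
    using \<open>s \<le> t\<close> by (intro nn_integral_cong) (auto simp: cond_prob_surv_increment mult_ac split: split_indicator)
  also have "\<dots> = (\<integral>\<^sup>+\<omega>. indicator {s<..t} (Y \<omega>) * ennreal (?r (Y \<omega>)) \<partial>M)
      + (\<integral>\<^sup>+\<omega>. indicator {s<..t} (X \<omega>) * (indicator A \<omega> * ennreal (1 / surv_left M X (X \<omega>)))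
          * ennreal (surv_left M Y (X \<omega>)) \<partial>M)"
    unfolding truncate
    by (subst nn_integral_interval_mult_surv_left[OF assms(1,2)], measurable, rule nn_integral_add, measurable)
  finally show ?thesis .
qed

lemma integrable_bounded_nonneg:
  fixes f :: "'a \<Rightarrow> real"
  assumes "f \<in> borel_measurable M" and "\<And>\<omega>. \<omega> \<in> space M \<Longrightarrow> 0 \<le> f \<omega> \<and> f \<omega> \<le> B"
  shows "integrable M f"
  using assms by (intro integrable_const_bound[where B = B] AE_I2) auto

lemma nn_integral_eq_integral_bounded:
  fixes f :: "'a \<Rightarrow> real"
  assumes "f \<in> borel_measurable M" and "\<And>\<omega>. \<omega> \<in> space M \<Longrightarrow> 0 \<le> f \<omega> \<and> f \<omega> \<le> B"
  shows "(\<integral>\<^sup>+\<omega>. ennreal (f \<omega>) \<partial>M) = ennreal (\<integral>\<omega>. f \<omega> \<partial>M)"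
  using assms by (intro nn_integral_eq_integral integrable_bounded_nonneg AE_I2) auto

lemma cond_prob_surv_integrated_increment_real:
  assumes [measurable]: "X \<in> borel_measurable M" "Y \<in> borel_measurable M" "A \<in> sets M"
    and "\<forall>\<omega>\<in>A. X \<omega> \<le> t" and "s \<le> t" and Y_le: "\<forall>\<omega>\<in>space M. Y \<omega> \<le> X \<omega>"
  shows "cond_prob_surv M X A s * surv M Y s
      + (\<integral>\<omega>. indicator {s<..t} (X \<omega>) * (cond_prob_surv M X A (X \<omega>) * surv_left M Y (X \<omega>) / surv_left M X (X \<omega>)) \<partial>M)
    = (\<integral>\<omega>. indicator {s<..t} (Y \<omega>) * cond_prob_surv M X A (Y \<omega>) \<partial>M)
      + (\<integral>\<omega>. indicator A \<omega> * (indicator {s<..t} (X \<omega>) * surv_left M Y (X \<omega>) / surv_left M X (X \<omega>)) \<partial>M)"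
    (is "?a + integral\<^sup>L M ?f = integral\<^sup>L M ?g + integral\<^sup>L M ?h")
proof -
  let ?r = "cond_prob_surv M X A"
  note [measurable] = borel_measurable_surv_left borel_measurable_cond_prob_surv
  have r: "0 \<le> ?r u" "?r u \<le> 1" for u
    by (simp_all add: cond_prob_surv_nonneg cond_prob_surv_le_1)
  note ratio = surv_left_ratio_bounded[OF assms(1,2) Y_le]
  have bounded: "0 \<le> ?f \<omega> \<and> ?f \<omega> \<le> 1" "0 \<le> ?g \<omega> \<and> ?g \<omega> \<le> 1" "0 \<le> ?h \<omega> \<and> ?h \<omega> \<le> 1" for \<omega>
    using r[of "X \<omega>"] r[of "Y \<omega>"] ratio[of "X \<omega>"]
      mult_le_one[of "?r (X \<omega>)" "surv_left M Y (X \<omega>) / surv_left M X (X \<omega>)"]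
      mult_nonneg_nonneg[of "?r (X \<omega>)" "surv_left M Y (X \<omega>) / surv_left M X (X \<omega>)"]
    by (auto split: split_indicator)
  have "ennreal ?a + ennreal (integral\<^sup>L M ?f) = ennreal (integral\<^sup>L M ?g) + ennreal (integral\<^sup>L M ?h)"
  proof -
    have "(\<integral>\<^sup>+\<omega>. indicator {s<..t} (X \<omega>) * ennreal (?r (X \<omega>) / surv_left M X (X \<omega>))
          * ennreal (surv_left M Y (X \<omega>)) \<partial>M) = (\<integral>\<^sup>+\<omega>. ennreal (?f \<omega>) \<partial>M)"
      by (intro nn_integral_cong) (auto simp: ennreal_mult''[symmetric] surv_left_eq split: split_indicator)
    moreover have "(\<integral>\<^sup>+\<omega>. indicator {s<..t} (Y \<omega>) * ennreal (?r (Y \<omega>)) \<partial>M) = (\<integral>\<^sup>+\<omega>. ennreal (?g \<omega>) \<partial>M)"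
      by (intro nn_integral_cong) (auto split: split_indicator)
    moreover have "(\<integral>\<^sup>+\<omega>. indicator {s<..t} (X \<omega>) * (indicator A \<omega> * ennreal (1 / surv_left M X (X \<omega>)))
          * ennreal (surv_left M Y (X \<omega>)) \<partial>M) = (\<integral>\<^sup>+\<omega>. ennreal (?h \<omega>) \<partial>M)"
      by (intro nn_integral_cong) (auto simp: ennreal_mult''[symmetric] surv_left_eq split: split_indicator)
    ultimately show ?thesis
      using cond_prob_surv_integrated_increment[OF assms(1-5)] bounded
      by (simp add: nn_integral_eq_integral_bounded[where B = 1])
  qed
  moreover have "0 \<le> ?a" "0 \<le> integral\<^sup>L M ?f" "0 \<le> integral\<^sup>L M ?g" "0 \<le> integral\<^sup>L M ?h"
    using bounded r by (auto intro!: integral_nonneg simp: surv_def)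
  ultimately show ?thesis
    by (simp add: ennreal_plus[symmetric] del: ennreal_plus)
qed

lemma cond_cif_eq_cond_prob_surv:
  assumes [measurable]: "X \<in> borel_measurable M" "E \<in> measurable M (count_space UNIV)" and "u \<le> t"
  shows "cond_cif M X E j t u = cond_prob_surv M X {\<omega> \<in> space M. X \<omega> \<le> t \<and> E \<omega> = j} u"
proof -
  have "{\<omega> \<in> space M. X \<omega> \<le> t \<and> E \<omega> = j} \<inter> {\<omega> \<in> space M. u < X \<omega>}
      = {\<omega> \<in> space M. X \<omega> \<le> t \<and> E \<omega> = j} - {\<omega> \<in> space M. X \<omega> \<le> u \<and> E \<omega> = j}"
    by auto
  then show ?thesis
    using \<open>u \<le> t\<close> by (simp add: cond_cif_def cond_prob_surv_def cif_def finite_measure_Diff subset_eq)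
qed

lemma cond_cif_bounded:
  assumes [measurable]: "X \<in> borel_measurable M" "E \<in> measurable M (count_space UNIV)" and "u \<le> t"
  shows "0 \<le> cond_cif M X E j t u" and "cond_cif M X E j t u \<le> 1"
  using assms by (simp_all add: cond_cif_eq_cond_prob_surv cond_prob_surv_nonneg cond_prob_surv_le_1)

lemma borel_measurable_cond_cif:
  assumes [measurable]: "X \<in> borel_measurable M" "E \<in> measurable M (count_space UNIV)"
  shows "cond_cif M X E j t \<in> borel_measurable borel"
proof -
  have "mono (cif M X E j)"
    unfolding cif_def by (auto intro!: monoI finite_measure_mono)
  then have [measurable]: "cif M X E j \<in> borel_measurable borel"
    by (rule borel_measurable_mono)
  show ?thesis
    unfolding cond_cif_def[abs_def] using borel_measurable_surv[OF assms(1)] by measurable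
qed

lemma cif_meas_eq_distr:
  assumes [measurable]: "X \<in> borel_measurable M" "E \<in> measurable M (count_space UNIV)"
  shows "cif_meas M X E i = distr (density M (indicator {\<omega> \<in> space M. E \<omega> = i})) borel X"
    (is "_ = ?N")
proof -
  have "cif_meas M X E i = measure_of UNIV (sets borel) (emeasure ?N)"
    unfolding cif_meas_def
  proof (rule measure_of_eq)
    fix B :: "real set" assume "B \<in> sigma_sets UNIV (sets borel)"
    then have [measurable]: "B \<in> sets borel"
      by (simp add: sets.sigma_sets_eq[of borel, simplified])
    have "emeasure ?N B = (\<integral>\<^sup>+\<omega>. indicator {\<omega> \<in> space M. E \<omega> = i} \<omega> * indicator (X -` B \<inter> space M) \<omega> \<partial>M)"
      by (simp add: emeasure_distr emeasure_density)
    also have "\<dots> = (\<integral>\<^sup>+\<omega>. indicator {\<omega> \<in> space M. X \<omega> \<in> B \<and> E \<omega> = i} \<omega> \<partial>M)"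
      by (intro nn_integral_cong) (auto split: split_indicator)
    also have "\<dots> = emeasure M {\<omega> \<in> space M. X \<omega> \<in> B \<and> E \<omega> = i}"
      by (rule nn_integral_indicator) measurable
    finally show "emeasure M {\<omega> \<in> space M. X \<omega> \<in> B \<and> E \<omega> = i} = emeasure ?N B" ..
  qed simp
  then show ?thesis
    using measure_of_of_measure[of ?N] by simp
qed

lemma set_integral_cif_meas:
  fixes f :: "real \<Rightarrow> real"
  assumes [measurable]: "X \<in> borel_measurable M" "E \<in> measurable M (count_space UNIV)"
    "A \<in> sets borel" "f \<in> borel_measurable borel"
  shows "set_lebesgue_integral (cif_meas M X E i) A f
    = (\<integral>\<omega>. indicator {\<omega> \<in> space M. E \<omega> = i} \<omega> * (indicator A (X \<omega>) * f (X \<omega>)) \<partial>M)"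
proof -
  have [measurable]: "X \<in> borel_measurable (density M (indicator {\<omega> \<in> space M. E \<omega> = i}))"
    by (simp add: measurable_cong_sets[OF sets_density refl])
  have "set_lebesgue_integral (cif_meas M X E i) A f
      = (\<integral>\<omega>. indicator A (X \<omega>) *\<^sub>R f (X \<omega>) \<partial>density M (indicator {\<omega> \<in> space M. E \<omega> = i}))"
    unfolding set_lebesgue_integral_def cif_meas_eq_distr[OF assms(1,2)]
    by (rule integral_distr[where f = "\<lambda>u. indicator A u *\<^sub>R f u"]) measurable
  also have "\<dots> = (\<integral>\<omega>. indicator {\<omega> \<in> space M. E \<omega> = i} \<omega> * (indicator A (X \<omega>) * f (X \<omega>)) \<partial>M)"
    unfolding ennreal_indicator[symmetric] by (subst integral_density) auto
  finally show ?thesis .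
qed

lemma set_integral_haz_meas:
  fixes f :: "real \<Rightarrow> real"
  assumes [measurable]: "X \<in> borel_measurable M" "E \<in> measurable M (count_space UNIV)"
    "A \<in> sets borel" "f \<in> borel_measurable borel"
  shows "set_lebesgue_integral (haz_meas M X E i) A f
    = (\<integral>\<omega>. indicator {\<omega> \<in> space M. E \<omega> = i} \<omega> * (indicator A (X \<omega>) * f (X \<omega>) / surv_left M X (X \<omega>)) \<partial>M)"
proof -
  note [measurable] = borel_measurable_surv_left[OF assms(1)]
  have [measurable_cong]: "sets (cif_meas M X E i) = sets borel"
    by (simp add: cif_meas_eq_distr)
  have "set_lebesgue_integral (haz_meas M X E i) A f = set_lebesgue_integral (cif_meas M X E i) A (\<lambda>u. f u / surv_left M X u)"
    unfolding haz_meas_def set_lebesgue_integral_def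
    by (subst integral_density) (auto simp: surv_left_eq)
  then show ?thesis
    by (simp add: set_integral_cif_meas)
qed

lemma integrable_div_surv_left:
  fixes f :: "real \<Rightarrow> real"
  assumes [measurable]: "X \<in> borel_measurable M" "A \<in> sets borel" "f \<in> borel_measurable borel"
    and bound: "\<And>u. u \<in> A \<Longrightarrow> \<bar>f u\<bar> \<le> B * surv_left M X u"
  shows "integrable M (\<lambda>\<omega>. indicator A (X \<omega>) * f (X \<omega>) / surv_left M X (X \<omega>))"
proof -
  note [measurable] = borel_measurable_surv_left[OF assms(1)]
  have "\<bar>indicator A (X \<omega>) * f (X \<omega>) / surv_left M X (X \<omega>)\<bar> \<le> \<bar>B\<bar>" for \<omega>
  proof (cases "X \<omega> \<in> A \<and> surv_left M X (X \<omega>) \<noteq> 0")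
    case True
    then have "0 < surv_left M X (X \<omega>)"
      by (simp add: surv_left_eq zero_less_measure_iff)
    moreover have "\<bar>f (X \<omega>)\<bar> / surv_left M X (X \<omega>) \<le> B"
      using True bound[of "X \<omega>"] \<open>0 < surv_left M X (X \<omega>)\<close> by (simp add: pos_divide_le_eq)
    ultimately show ?thesis
      using True abs_ge_self[of B] by (simp add: abs_divide)
  qed auto
  then show ?thesis
    by (intro integrable_const_bound[where B = "\<bar>B\<bar>"] AE_I2) auto
qed

lemma sum_set_integral_haz_meas:
  fixes f :: "real \<Rightarrow> real"
  assumes [measurable]: "X \<in> borel_measurable M" "E \<in> measurable M (count_space UNIV)"
    "A \<in> sets borel" "f \<in> borel_measurable borel"
    and "finite I" and bound: "\<And>u. u \<in> A \<Longrightarrow> \<bar>f u\<bar> \<le> B * surv_left M X u"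
  shows "(\<Sum>i\<in>I. set_lebesgue_integral (haz_meas M X E i) A f)
    = (\<integral>\<omega>. indicator {\<omega> \<in> space M. E \<omega> \<in> I} \<omega> * (indicator A (X \<omega>) * f (X \<omega>) / surv_left M X (X \<omega>)) \<partial>M)"
proof -
  let ?g = "\<lambda>\<omega>. indicator A (X \<omega>) * f (X \<omega>) / surv_left M X (X \<omega>)"
  have int: "integrable M ?g"
    using bound by (rule integrable_div_surv_left[OF assms(1,3,4)])
  have "(\<Sum>i\<in>I. set_lebesgue_integral (haz_meas M X E i) A f)
      = (\<Sum>i\<in>I. \<integral>\<omega>. indicator {\<omega> \<in> space M. E \<omega> = i} \<omega> * ?g \<omega> \<partial>M)"
    by (intro sum.cong refl) (simp add: set_integral_haz_meas)
  also have "\<dots> = (\<integral>\<omega>. (\<Sum>i\<in>I. indicator {\<omega> \<in> space M. E \<omega> = i} \<omega> * ?g \<omega>) \<partial>M)"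
  proof (rule Bochner_Integration.integral_sum[symmetric])
    fix i
    show "integrable M (\<lambda>\<omega>. indicator {\<omega> \<in> space M. E \<omega> = i} \<omega> * ?g \<omega>)"
      using integrable_mult_indicator[OF _ int, of "{\<omega> \<in> space M. E \<omega> = i}"] by simp
  qed
  also have "\<dots> = (\<integral>\<omega>. indicator {\<omega> \<in> space M. E \<omega> \<in> I} \<omega> * ?g \<omega> \<partial>M)"
  proof (intro Bochner_Integration.integral_cong refl)
    fix \<omega> assume "\<omega> \<in> space M"
    then have "(\<Sum>i\<in>I. indicator {\<omega> \<in> space M. E \<omega> = i} \<omega> :: real) = indicator {\<omega> \<in> space M. E \<omega> \<in> I} \<omega>"
      using \<open>finite I\<close> by (simp add: indicator_def of_bool_def sum.delta')
    then show "(\<Sum>i\<in>I. indicator {\<omega> \<in> space M. E \<omega> = i} \<omega> * ?g \<omega>) = indicator {\<omega> \<in> space M. E \<omega> \<in> I} \<omega> * ?g \<omega>"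
      by (simp only: sum_distrib_right[symmetric])
  qed
  finally show ?thesis .
qed

end

locale censored_competing_risks = prob_space M for M :: "'a measure" +
  fixes T Tt :: "'a \<Rightarrow> real" and D Dt :: "'a \<Rightarrow> nat" and d :: nat
  assumes T_measurable[measurable]: "T \<in> borel_measurable M"
    and Tt_measurable[measurable]: "Tt \<in> borel_measurable M"
    and D_measurable[measurable]: "D \<in> measurable M (count_space UNIV)"
    and D_range: "\<forall>\<omega>\<in>space M. D \<omega> \<in> {1..d}"
    and Tt_le_T: "\<forall>\<omega>\<in>space M. Tt \<omega> \<le> T \<omega>"
    and Dt_eq: "\<forall>\<omega>\<in>space M. Dt \<omega> = (if Tt \<omega> = T \<omega> then D \<omega> else 0)"
begin

lemma Dt_measurable[measurable]: "Dt \<in> measurable M (count_space UNIV)"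
proof -
  have "(\<lambda>\<omega>. if Tt \<omega> = T \<omega> then D \<omega> else 0) \<in> measurable M (count_space UNIV)"
    by measurable
  then show ?thesis
    using Dt_eq by (subst measurable_cong) auto
qed

lemma Dt_borel_measurable[measurable]: "Dt \<in> borel_measurable M"
  using measurable_compose[OF Dt_measurable borel_measurable_count_space[of "\<lambda>n. n"]] by simp

lemma Dt_le: "\<omega> \<in> space M \<Longrightarrow> Dt \<omega> \<le> d"
  using D_range Dt_eq by auto

lemmas [measurable] = borel_measurable_surv_left[OF T_measurable] borel_measurable_surv_left[OF Tt_measurable]
  borel_measurable_cond_cif[OF T_measurable D_measurable]

lemma cond_prob_cause_eq_cond_cif:
  assumes "s \<le> t"
  shows "measure M {\<omega> \<in> space M. T \<omega> \<le> t \<and> D \<omega> = j \<and> T \<omega> > s} / surv M T s = cond_cif M T D j t s"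
proof -
  have "{\<omega> \<in> space M. T \<omega> \<le> t \<and> D \<omega> = j \<and> T \<omega> > s}
      = {\<omega> \<in> space M. T \<omega> \<le> t \<and> D \<omega> = j} \<inter> {\<omega> \<in> space M. s < T \<omega>}"
    by auto
  then show ?thesis
    using assms by (simp add: cond_cif_eq_cond_prob_surv cond_prob_surv_def)
qed

lemma prob_cause_censored_after_split:
  assumes "j \<noteq> 0"
  shows "measure M {\<omega> \<in> space M. T \<omega> \<le> t \<and> D \<omega> = j \<and> Tt \<omega> > s}
    = measure M {\<omega> \<in> space M. Dt \<omega> = j \<and> Tt \<omega> \<in> {s<..t}}
      + measure M {\<omega> \<in> space M. T \<omega> \<le> t \<and> D \<omega> = j \<and> Tt \<omega> \<in> {s<..t} \<and> Dt \<omega> = 0}"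
proof -
  have "{\<omega> \<in> space M. T \<omega> \<le> t \<and> D \<omega> = j \<and> Tt \<omega> > s}
      = {\<omega> \<in> space M. Dt \<omega> = j \<and> Tt \<omega> \<in> {s<..t}}
        \<union> {\<omega> \<in> space M. T \<omega> \<le> t \<and> D \<omega> = j \<and> Tt \<omega> \<in> {s<..t} \<and> Dt \<omega> = 0}"
    using Tt_le_T Dt_eq assms by (auto intro: order_trans split: if_splits)
  then show ?thesis
    using assms Dt_eq by (simp add: finite_measure_Union disjoint_iff)
qed

lemma cond_cif_integrated_increment:
  assumes "s \<le> t"
  shows "cond_cif M T D j t s * surv M Tt s
      + (\<integral>\<omega>. indicator {s<..t} (T \<omega>) * (cond_cif M T D j t (T \<omega>) * surv_left M Tt (T \<omega>) / surv_left M T (T \<omega>)) \<partial>M)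
    = (\<integral>\<omega>. indicator {s<..t} (Tt \<omega>) * cond_cif M T D j t (Tt \<omega>) \<partial>M)
      + (\<integral>\<omega>. indicator {\<omega> \<in> space M. D \<omega> = j} \<omega> * (indicator {s<..t} (T \<omega>) * surv_left M Tt (T \<omega>) / surv_left M T (T \<omega>)) \<partial>M)"
proof -
  let ?A = "{\<omega> \<in> space M. T \<omega> \<le> t \<and> D \<omega> = j}" and ?c = "cond_cif M T D j t"
  have c: "?c u = cond_prob_surv M T ?A u" if "u \<le> t" for u
    using that by (rule cond_cif_eq_cond_prob_surv[OF T_measurable D_measurable])
  have A_le: "\<forall>\<omega>\<in>?A. T \<omega> \<le> t" and A_meas: "?A \<in> sets M"
    by auto
  have "(\<integral>\<omega>. indicator {s<..t} (T \<omega>) * (?c (T \<omega>) * surv_left M Tt (T \<omega>) / surv_left M T (T \<omega>)) \<partial>M)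
      = (\<integral>\<omega>. indicator {s<..t} (T \<omega>) * (cond_prob_surv M T ?A (T \<omega>) * surv_left M Tt (T \<omega>) / surv_left M T (T \<omega>)) \<partial>M)"
    and "(\<integral>\<omega>. indicator {s<..t} (Tt \<omega>) * ?c (Tt \<omega>) \<partial>M)
      = (\<integral>\<omega>. indicator {s<..t} (Tt \<omega>) * cond_prob_surv M T ?A (Tt \<omega>) \<partial>M)"
    and "(\<integral>\<omega>. indicator {\<omega> \<in> space M. D \<omega> = j} \<omega> * (indicator {s<..t} (T \<omega>) * surv_left M Tt (T \<omega>) / surv_left M T (T \<omega>)) \<partial>M)
      = (\<integral>\<omega>. indicator ?A \<omega> * (indicator {s<..t} (T \<omega>) * surv_left M Tt (T \<omega>) / surv_left M T (T \<omega>)) \<partial>M)"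
    by (auto intro!: Bochner_Integration.integral_cong simp: c split: split_indicator)
  moreover have "?c s * surv M Tt s = cond_prob_surv M T ?A s * surv M Tt s"
    by (simp only: c[OF assms])
  ultimately show ?thesis
    using cond_prob_surv_integrated_increment_real[OF T_measurable Tt_measurable A_meas A_le assms Tt_le_T]
    by linarith
qed

lemma integral_cond_cif_Tt_split:
  "(\<integral>\<omega>. indicator {s<..t} (Tt \<omega>) * cond_cif M T D j t (Tt \<omega>) \<partial>M)
    = (\<integral>\<omega>. indicator {\<omega> \<in> space M. Dt \<omega> \<noteq> 0} \<omega> * (indicator {s<..t} (Tt \<omega>) * cond_cif M T D j t (Tt \<omega>)) \<partial>M)
      + (\<integral>\<omega>. indicator {\<omega> \<in> space M. Dt \<omega> = 0} \<omega> * (indicator {s<..t} (Tt \<omega>) * cond_cif M T D j t (Tt \<omega>)) \<partial>M)"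
proof -
  have "integrable M (\<lambda>\<omega>. indicator {\<omega> \<in> space M. P (Dt \<omega>)} \<omega> * (indicator {s<..t} (Tt \<omega>) * cond_cif M T D j t (Tt \<omega>)))" for P
    using cond_cif_bounded[OF T_measurable D_measurable]
    by (intro integrable_bounded_nonneg[where B = 1]) (auto split: split_indicator)
  then show ?thesis
    by (subst Bochner_Integration.integral_add[symmetric]) (auto intro!: Bochner_Integration.integral_cong split: split_indicator)
qed

lemma sum_set_integral_haz_meas_T:
  "(\<Sum>i=1..d. set_lebesgue_integral (haz_meas M T D i) {s<..t} (\<lambda>u. cond_cif M T D j t u * surv_left M Tt u))
    = (\<integral>\<omega>. indicator {s<..t} (T \<omega>) * (cond_cif M T D j t (T \<omega>) * surv_left M Tt (T \<omega>) / surv_left M T (T \<omega>)) \<partial>M)"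
proof -
  have "\<bar>cond_cif M T D j t u * surv_left M Tt u\<bar> \<le> 1 * surv_left M T u" if "u \<in> {s<..t}" for u
    using that cond_cif_bounded[OF T_measurable D_measurable, of u t j]
      surv_left_le_surv_left[OF T_measurable Tt_measurable Tt_le_T, of u]
      mult_left_le_one_le[of "surv_left M Tt u" "cond_cif M T D j t u"]
    by (simp add: abs_mult surv_left_eq)
  then show ?thesis
    using D_range by (subst sum_set_integral_haz_meas[where B = 1]) (auto intro!: Bochner_Integration.integral_cong)
qed

lemma set_integral_haz_meas_T_cause:
  "set_lebesgue_integral (haz_meas M T D j) {s<..t} (surv_left M Tt)
    = (\<integral>\<omega>. indicator {\<omega> \<in> space M. D \<omega> = j} \<omega> * (indicator {s<..t} (T \<omega>) * surv_left M Tt (T \<omega>) / surv_left M T (T \<omega>)) \<partial>M)"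
  by (rule set_integral_haz_meas) measurable

lemma sum_set_integral_haz_meas_Tt:
  "(\<Sum>i=1..d. set_lebesgue_integral (haz_meas M Tt Dt i) {s<..t} (\<lambda>u. cond_cif M T D j t u * surv_left M Tt u))
    = (\<integral>\<omega>. indicator {\<omega> \<in> space M. Dt \<omega> \<noteq> 0} \<omega> * (indicator {s<..t} (Tt \<omega>) * cond_cif M T D j t (Tt \<omega>)) \<partial>M)"
proof -
  have "\<bar>cond_cif M T D j t u * surv_left M Tt u\<bar> \<le> 1 * surv_left M Tt u" if "u \<in> {s<..t}" for u
    using that cond_cif_bounded[OF T_measurable D_measurable, of u t j]
      mult_left_le_one_le[of "surv_left M Tt u" "cond_cif M T D j t u"]
    by (simp add: abs_mult surv_left_eq)
  then have "(\<Sum>i=1..d. set_lebesgue_integral (haz_meas M Tt Dt i) {s<..t} (\<lambda>u. cond_cif M T D j t u * surv_left M Tt u))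
    = (\<integral>\<omega>. indicator {\<omega> \<in> space M. Dt \<omega> \<in> {1..d}} \<omega>
        * (indicator {s<..t} (Tt \<omega>) * (cond_cif M T D j t (Tt \<omega>) * surv_left M Tt (Tt \<omega>)) / surv_left M Tt (Tt \<omega>)) \<partial>M)"
    by (intro sum_set_integral_haz_meas[where B = 1]) auto
  also have "\<dots> = (\<integral>\<omega>. indicator {\<omega> \<in> space M. Dt \<omega> \<noteq> 0} \<omega> * (indicator {s<..t} (Tt \<omega>) * cond_cif M T D j t (Tt \<omega>)) \<partial>M)"
  proof (rule integral_cong_AE)
    show "AE \<omega> in M. indicator {\<omega> \<in> space M. Dt \<omega> \<in> {1..d}} \<omega>
        * (indicator {s<..t} (Tt \<omega>) * (cond_cif M T D j t (Tt \<omega>) * surv_left M Tt (Tt \<omega>)) / surv_left M Tt (Tt \<omega>))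
      = indicator {\<omega> \<in> space M. Dt \<omega> \<noteq> 0} \<omega> * (indicator {s<..t} (Tt \<omega>) * cond_cif M T D j t (Tt \<omega>))"
      using AE_space AE_surv_left_pos[OF Tt_measurable]
      by eventually_elim (auto simp: Dt_le split: split_indicator)
  qed measurable
  finally show ?thesis .
qed

lemma set_integral_haz_meas_Tt_cause:
  "set_lebesgue_integral (haz_meas M Tt Dt j) {s<..t} (surv_left M Tt)
    = measure M {\<omega> \<in> space M. Dt \<omega> = j \<and> Tt \<omega> \<in> {s<..t}}"
proof -
  have "set_lebesgue_integral (haz_meas M Tt Dt j) {s<..t} (surv_left M Tt)
      = (\<integral>\<omega>. indicator {\<omega> \<in> space M. Dt \<omega> = j} \<omega> * (indicator {s<..t} (Tt \<omega>) * surv_left M Tt (Tt \<omega>) / surv_left M Tt (Tt \<omega>)) \<partial>M)"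
    by (rule set_integral_haz_meas) measurable
  also have "\<dots> = (\<integral>\<omega>. indicator {\<omega> \<in> space M. Dt \<omega> = j \<and> Tt \<omega> \<in> {s<..t}} \<omega> \<partial>M)"
  proof (rule integral_cong_AE)
    show "AE \<omega> in M. indicator {\<omega> \<in> space M. Dt \<omega> = j} \<omega> * (indicator {s<..t} (Tt \<omega>) * surv_left M Tt (Tt \<omega>) / surv_left M Tt (Tt \<omega>))
      = indicator {\<omega> \<in> space M. Dt \<omega> = j \<and> Tt \<omega> \<in> {s<..t}} \<omega>"
      using AE_space AE_surv_left_pos[OF Tt_measurable]
      by eventually_elim (auto split: split_indicator)
  qed measurable
  also have "\<dots> = measure M {\<omega> \<in> space M. Dt \<omega> = j \<and> Tt \<omega> \<in> {s<..t}}"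
    by simp
  finally show ?thesis .
qed

lemma set_integral_cif_meas_censored:
  fixes g :: "real \<Rightarrow> real"
  assumes [measurable]: "g \<in> borel_measurable borel" and g_bounded: "\<forall>u. 0 \<le> g u \<and> g u \<le> 1"
    and g_version: "measure M {\<omega> \<in> space M. T \<omega> \<le> t \<and> D \<omega> = j \<and> Tt \<omega> \<in> {s<..t} \<and> Dt \<omega> = 0}
      = set_lebesgue_integral (cif_meas M Tt Dt 0) {s<..t} g"
  shows "set_lebesgue_integral (cif_meas M Tt Dt 0) {s<..t} (\<lambda>u. cond_cif M T D j t u - g u)
    = (\<integral>\<omega>. indicator {\<omega> \<in> space M. Dt \<omega> = 0} \<omega> * (indicator {s<..t} (Tt \<omega>) * cond_cif M T D j t (Tt \<omega>)) \<partial>M)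
      - measure M {\<omega> \<in> space M. T \<omega> \<le> t \<and> D \<omega> = j \<and> Tt \<omega> \<in> {s<..t} \<and> Dt \<omega> = 0}"
proof -
  let ?I = "\<lambda>h \<omega>. indicator {\<omega> \<in> space M. Dt \<omega> = 0} \<omega> * (indicator {s<..t} (Tt \<omega>) * h (Tt \<omega>))"
  have "integrable M (?I (cond_cif M T D j t))" and "integrable M (?I g)"
    using cond_cif_bounded[OF T_measurable D_measurable] g_bounded
    by (auto intro!: integrable_bounded_nonneg[where B = 1] split: split_indicator)
  moreover have "set_lebesgue_integral (cif_meas M Tt Dt 0) {s<..t} (\<lambda>u. cond_cif M T D j t u - g u)
      = (\<integral>\<omega>. ?I (cond_cif M T D j t) \<omega> - ?I g \<omega> \<partial>M)"
    by (subst set_integral_cif_meas) (auto simp: algebra_simps)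
  ultimately show ?thesis
    using g_version by (simp add: set_integral_cif_meas)
qed

end

theorem lemma4:
  fixes M :: "'a measure" and T Tt :: "'a \<Rightarrow> real" and D Dt :: "'a \<Rightarrow> nat"
    and d j :: nat and s t :: real and g :: "real \<Rightarrow> real"
  assumes "prob_space M"
    and "d \<ge> 1"
    and "T \<in> borel_measurable M" and "Tt \<in> borel_measurable M"
    and "D \<in> measurable M (count_space UNIV)"
    and "\<forall>\<omega>\<in>space M. 0 < T \<omega> \<and> D \<omega> \<in> {1..d}"
    and "\<forall>\<omega>\<in>space M. 0 < Tt \<omega> \<and> Tt \<omega> \<le> T \<omega>"
    and "\<forall>\<omega>\<in>space M. Dt \<omega> = (if Tt \<omega> = T \<omega> then D \<omega> else 0)"
    and "j \<in> {1..d}"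
    and "surv M Tt s > 0"
    and "t > s"
    \<comment> \<open>g is a version of u \<mapsto> P(T \<le> t, D = j | Tt = u, Dt = 0)\<close>
    and "g \<in> borel_measurable borel"
    and "\<forall>u. 0 \<le> g u \<and> g u \<le> 1"
    and "\<forall>A\<in>sets borel.
           measure M {\<omega> \<in> space M. T \<omega> \<le> t \<and> D \<omega> = j \<and> Tt \<omega> \<in> A \<and> Dt \<omega> = 0}
           = set_lebesgue_integral (cif_meas M Tt Dt 0) A g"
  shows
    "measure M {\<omega> \<in> space M. T \<omega> \<le> t \<and> D \<omega> = j \<and> T \<omega> > s} / surv M T s
     - measure M {\<omega> \<in> space M. T \<omega> \<le> t \<and> D \<omega> = j \<and> Tt \<omega> > s} / surv M Tt s
     = (\<Sum>i=1..d. set_lebesgue_integral (haz_meas M Tt Dt i) {s<..t}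
            (\<lambda>u. cond_cif M T D j t u * surv_left M Tt u / surv M Tt s))
       - (\<Sum>i=1..d. set_lebesgue_integral (haz_meas M T D i) {s<..t}
            (\<lambda>u. cond_cif M T D j t u * surv_left M Tt u / surv M Tt s))
     + (set_lebesgue_integral (haz_meas M T D j) {s<..t} (\<lambda>u. surv_left M Tt u / surv M Tt s)
        - set_lebesgue_integral (haz_meas M Tt Dt j) {s<..t} (\<lambda>u. surv_left M Tt u / surv M Tt s))
     + (1 / surv M Tt s) * set_lebesgue_integral (cif_meas M Tt Dt 0) {s<..t}
            (\<lambda>u. cond_cif M T D j t u - g u)"
proof -
  interpret censored_competing_risks M T Tt D Dt d
    using assms(1,3-8) by (intro censored_competing_risks.intro censored_competing_risks_axioms.intro) auto
  have "s \<le> t" and "j \<noteq> 0" and "surv M Tt s \<noteq> 0"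
    using assms(9-11) by auto
  have "{s<..t} \<in> sets borel"
    by simp
  note censored = set_integral_cif_meas_censored[OF assms(12,13) bspec[OF assms(14) this]]
  have arith: "c - (p + q) / \<sigma> = b\<^sub>1 / \<sigma> - a / \<sigma> + (e / \<sigma> - p / \<sigma>) + 1 / \<sigma> * (b\<^sub>0 - q)"
    if "c * \<sigma> + a = b + e" and "b = b\<^sub>1 + b\<^sub>0" and "\<sigma> \<noteq> 0" for c \<sigma> a b b\<^sub>1 b\<^sub>0 e p q :: real
  proof -
    have "c = (b\<^sub>1 + b\<^sub>0 + e - a) / \<sigma>"
      using that by (simp add: eq_divide_eq)
    then show ?thesis
      using that(3) by (simp add: diff_divide_distrib add_divide_distrib)
  qed
  show ?thesis
    unfolding set_integral_divide_zero sum_divide_distrib[symmetric] sum_set_integral_haz_meas_T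
      sum_set_integral_haz_meas_Tt set_integral_haz_meas_T_cause set_integral_haz_meas_Tt_cause censored
      cond_prob_cause_eq_cond_cif[OF \<open>s \<le> t\<close>] prob_cause_censored_after_split[OF \<open>j \<noteq> 0\<close>]
    using cond_cif_integrated_increment[OF \<open>s \<le> t\<close>] integral_cond_cif_Tt_split \<open>surv M Tt s \<noteq> 0\<close>
    by (rule arith)
qed

end
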